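(* Let $\mathbb{F}$ be any field. There exists an infinite sequence $C_1,C_2,C_3,\dots$ of $\mathbb{F}$-linear codes such that, if $C_i$ has parameters $[n_i,k_i,d_i]$, then for every $i\ge 1$ \[ \frac{k_i d_i}{n_i}=2i>\sqrt{k_i}-1>2i-1 . \]
   Context: An $\mathbb{F}$-linear code of length $n$ is an $\mathbb{F}$-subspace $C\le\mathbb{F}^n$. Its parameters $[n,k,d]$ are the length $n$, the dimension $k=\dim_{\mathbb{F}}C$, and the minimum distance $d$. The minimum distance is the minimum Hamming weight of a nonzero codeword, where the weight $\mathrm{wt}(x)$ of $x\in\mathbb{F}^n$ is its number of nonzero coordinates. *)

theory Defs
  imports Complex_Main "HOL-Library.Function_Algebras"
begin

text \<open>Vectors of F^n are represented as functions nat => F vanishing outside {..<n}.\<close>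

definition Fn :: "nat \<Rightarrow> (nat \<Rightarrow> 'a::field) set" where
  "Fn n = {v. \<forall>i\<ge>n. v i = 0}"

definition vscale :: "'a::field \<Rightarrow> (nat \<Rightarrow> 'a) \<Rightarrow> (nat \<Rightarrow> 'a)" where
  "vscale c v = (\<lambda>i. c * v i)"

definition linear_code :: "nat \<Rightarrow> (nat \<Rightarrow> 'a::field) set \<Rightarrow> bool" where
  "linear_code n C \<longleftrightarrow> C \<subseteq> Fn n \<and> ((\<lambda>i. 0) \<in> C) \<and>
     (\<forall>x\<in>C. \<forall>y\<in>C. (\<lambda>i. x i + y i) \<in> C) \<and> (\<forall>c. \<forall>x\<in>C. vscale c x \<in> C)"

definition code_dim :: "(nat \<Rightarrow> 'a::field) set \<Rightarrow> nat" where
  "code_dim C = vector_space.dim vscale C"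

definition wt :: "nat \<Rightarrow> (nat \<Rightarrow> 'a::zero) \<Rightarrow> nat" where
  "wt n x = card {i. i < n \<and> x i \<noteq> 0}"

definition min_dist :: "nat \<Rightarrow> (nat \<Rightarrow> 'a::zero) set \<Rightarrow> nat" where
  "min_dist n C = Min (wt n ` {x\<in>C. \<exists>i<n. x i \<noteq> 0})"

end

theory Submission
  imports Defs
begin

text \<open>Over any field, the Hadamard-type code of length \<open>2^m\<close> sends a message \<open>y\<close> to
  \<open>u \<mapsto> \<Sum>{y j | bit j of u is set}\<close>. Flipping bit \<open>j\<close> of \<open>u\<close> changes the symbol by \<open>\<plusminus>y j\<close>,
  so if \<open>y j \<noteq> 0\<close> at least one position of each pair \<open>{u, u xor 2^j}\<close> is nonzero and the weight
  is at least \<open>2^(m-1)\<close>; the message \<open>e\<^sub>0\<close> attains this. Interleaving \<open>r\<close> copies gives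
  parameters \<open>[r 2^m, m r, 2^(m-1)]\<close>, hence \<open>k d / n = m / 2\<close>. With \<open>m = 4 i\<close> and \<open>r = i + 1\<close>
  we get \<open>k = 4 i (i + 1)\<close>, whose square root lies strictly between \<open>2 i\<close> and \<open>2 i + 1\<close>.\<close>

interpretation V: vector_space "vscale :: 'a::field \<Rightarrow> (nat \<Rightarrow> 'a) \<Rightarrow> _"
  by unfold_locales (auto simp: vscale_def fun_eq_iff algebra_simps)

interpretation VV: vector_space_pair "vscale :: 'a::field \<Rightarrow> (nat \<Rightarrow> 'a) \<Rightarrow> _" vscale ..

lemma sum_fun_apply: "sum f A x = (\<Sum>a\<in>A. f a x)"
  by (induction A rule: infinite_finite_induct) auto

definition unit_vec :: "nat \<Rightarrow> nat \<Rightarrow> 'a::zero_neq_one" where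
  "unit_vec q i = (if i = q then 1 else 0)"

lemma subspace_Fn: "V.subspace (Fn n :: (nat \<Rightarrow> 'a::field) set)"
  by (auto simp: V.subspace_def Fn_def vscale_def)

lemma Fn_eq_span_unit_vecs: "(Fn n :: (nat \<Rightarrow> 'a::field) set) = V.span (unit_vec ` {..<n})"
  (is "_ = ?span")
proof
  show "Fn n \<subseteq> ?span"
  proof
    fix x :: "nat \<Rightarrow> 'a" assume "x \<in> Fn n"
    then have "x = (\<Sum>q<n. vscale (x q) (unit_vec q))"
      by (auto simp: fun_eq_iff sum_fun_apply vscale_def unit_vec_def Fn_def if_distrib
          cong: if_cong)
    also have "\<dots> \<in> ?span"
      by (intro V.span_sum V.span_scale V.span_base) auto
    finally show "x \<in> ?span" .
  qed
next
  show "?span \<subseteq> Fn n"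
    by (intro V.span_minimal subspace_Fn) (auto simp: Fn_def unit_vec_def)
qed

lemma unit_vec_eq_iff: "unit_vec p = unit_vec q \<longleftrightarrow> p = q"
  by (metis unit_vec_def zero_neq_one)

lemma independent_unit_vecs:
  assumes "finite A"
  shows "V.independent (unit_vec ` A :: (nat \<Rightarrow> 'a::field) set)"
proof (rule V.independent_if_scalars_zero)
  show "finite (unit_vec ` A :: (nat \<Rightarrow> 'a) set)" using assms by simp
next
  fix f :: "(nat \<Rightarrow> 'a) \<Rightarrow> 'a" and v :: "nat \<Rightarrow> 'a"
  assume sum0: "(\<Sum>u\<in>unit_vec ` A. vscale (f u) u) = 0" and v: "v \<in> unit_vec ` A"
  then obtain q where q: "q \<in> A" "v = unit_vec q" by blast
  have "0 = (\<Sum>u\<in>unit_vec ` A. vscale (f u) u) q" using sum0 by simp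
  also have "\<dots> = (\<Sum>u\<in>unit_vec ` A. if u = v then f u else 0)"
    unfolding sum_fun_apply
  proof (rule sum.cong)
    fix u :: "nat \<Rightarrow> 'a" assume "u \<in> unit_vec ` A"
    then obtain p where "u = unit_vec p" by blast
    then show "vscale (f u) u q = (if u = v then f u else 0)"
      by (simp add: vscale_def q unit_vec_eq_iff) (simp add: unit_vec_def)
  qed simp
  also have "\<dots> = f v" using assms v by simp
  finally show "f v = 0" by simp
qed

lemma code_dim_linear_image:
  fixes f :: "(nat \<Rightarrow> 'a::field) \<Rightarrow> nat \<Rightarrow> 'a"
  assumes f: "Vector_Spaces.linear vscale vscale f" and inj: "inj_on f (Fn n)"
  shows "code_dim (f ` Fn n) = n"
proof -
  let ?B = "unit_vec ` {..<n} :: (nat \<Rightarrow> 'a) set"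
  have span: "Fn n = V.span ?B"
    by (rule Fn_eq_span_unit_vecs)
  have B: "?B \<subseteq> Fn n"
    unfolding span by (rule V.span_superset)
  have "inj_on (unit_vec :: nat \<Rightarrow> nat \<Rightarrow> 'a) {..<n}"
    by (simp add: inj_on_def unit_vec_eq_iff)
  moreover have "inj_on f ?B"
    using inj B by (rule inj_on_subset)
  ultimately have card: "card (f ` ?B) = n"
    by (simp add: card_image)
  show ?thesis
    unfolding code_dim_def
  proof (rule V.dim_unique[OF _ _ _ card])
    show "f ` ?B \<subseteq> f ` Fn n"
      using B by (rule image_mono)
    show "f ` Fn n \<subseteq> V.span (f ` ?B)"
      unfolding VV.linear_span_image[OF f] span by (rule order_refl)
    show "V.independent (f ` ?B)"
      using VV.linear_independent_injective_image[OF f independent_unit_vecs] inj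
      unfolding span by blast
  qed
qed

lemma linear_code_iff_subspace: "linear_code n C \<longleftrightarrow> C \<subseteq> Fn n \<and> V.subspace C"
  by (simp add: linear_code_def V.subspace_def zero_fun_def plus_fun_def)

lemma linear_code_linear_image:
  fixes f :: "(nat \<Rightarrow> 'a::field) \<Rightarrow> nat \<Rightarrow> 'a"
  assumes "Vector_Spaces.linear vscale vscale f" and "f ` Fn k \<subseteq> Fn n"
  shows "linear_code n (f ` Fn k)"
  using VV.linear_subspace_image[OF assms(1) subspace_Fn] assms(2)
  by (simp add: linear_code_iff_subspace)

lemma wt_le: "wt n x \<le> n"
  unfolding wt_def by (rule card_mono[of "{..<n}", simplified]) auto

lemma min_dist_eqI:
  assumes lower: "\<And>x. x \<in> C \<Longrightarrow> \<exists>i<n. x i \<noteq> 0 \<Longrightarrow> d \<le> wt n x"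
    and w: "w \<in> C" "\<exists>i<n. w i \<noteq> 0" "wt n w \<le> d"
  shows "min_dist n C = d"
  unfolding min_dist_def
proof (rule Min_eqI)
  show "finite (wt n ` {x \<in> C. \<exists>i<n. x i \<noteq> 0})"
    by (rule finite_subset[of _ "{..n}"]) (auto simp: wt_le)
  show "d \<in> wt n ` {x \<in> C. \<exists>i<n. x i \<noteq> 0}"
    using w lower[of w] by (intro image_eqI[of _ _ w]) auto
qed (use lower in auto)

definition hadamard :: "nat \<Rightarrow> (nat \<Rightarrow> 'a::comm_ring_1) \<Rightarrow> nat \<Rightarrow> 'a" where
  "hadamard m y u = (\<Sum>j<m. if bit u j then y j else 0)"

lemma hadamard_exp: "j < m \<Longrightarrow> hadamard m y (2 ^ j) = y j"
  by (simp add: hadamard_def bit_exp_iff)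

lemma hadamard_zero: "hadamard m (\<lambda>j. 0) u = 0"
  by (simp add: hadamard_def)

lemma hadamard_unit_vec_0:
  assumes "0 < m"
  shows "hadamard m (unit_vec 0) u = (if odd u then 1 else 0)"
proof -
  have "hadamard m (unit_vec 0) u = (\<Sum>j<m. if j = 0 then (if odd u then 1 else 0) else 0)"
    unfolding hadamard_def by (rule sum.cong) (auto simp: unit_vec_def bit_0)
  then show ?thesis
    using assms by simp
qed

lemma hadamard_flip_bit:
  assumes "j < m"
  shows "hadamard m y (flip_bit j u) = hadamard m y u + (if bit u j then - y j else y j)"
proof -
  let ?rest = "\<lambda>v. \<Sum>i\<in>{..<m} - {j}. if bit v i then y i else 0"
  have split: "hadamard m y v = (if bit v j then y j else 0) + ?rest v" for v
    unfolding hadamard_def using assms by (simp add: sum.remove)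
  have "?rest (flip_bit j u) = ?rest u"
    by (rule sum.cong) (auto simp: bit_flip_bit_iff)
  then show ?thesis
    using split[of u] split[of "flip_bit j u"] by (simp add: bit_flip_bit_iff)
qed

lemma flip_bit_flip_bit: "flip_bit j (flip_bit j u) = (u :: nat)"
  by (rule bit_eqI) (auto simp: bit_flip_bit_iff)

lemma flip_bit_less_exp:
  assumes "j < m" "u < 2 ^ m"
  shows "flip_bit j u < (2 :: nat) ^ m"
proof -
  have "take_bit m u = u"
    using assms(2) by (simp add: take_bit_nat_eq_self_iff)
  then have "take_bit m (flip_bit j u) = flip_bit j u"
    using assms(1) by (simp add: take_bit_flip_bit_eq)
  then show ?thesis
    by (metis take_bit_nat_eq_self_iff)
qed

lemma hadamard_weight_lower:
  assumes j: "j < m" and yj: "y j \<noteq> 0"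
  shows "2 ^ m \<le> 2 * card {u. u < 2 ^ m \<and> hadamard m y u \<noteq> 0}"
proof -
  let ?Z = "{u. u < 2 ^ m \<and> hadamard m y u \<noteq> 0}"
  have "{..<2 ^ m} \<subseteq> ?Z \<union> flip_bit j ` ?Z"
  proof
    fix u :: nat assume u: "u \<in> {..<2 ^ m}"
    show "u \<in> ?Z \<union> flip_bit j ` ?Z"
    proof (cases "hadamard m y u = 0")
      case True
      then have "flip_bit j u \<in> ?Z"
        using hadamard_flip_bit[OF j, of y u] yj flip_bit_less_exp[OF j] u
        by (auto split: if_split_asm)
      moreover have "u = flip_bit j (flip_bit j u)"
        by (simp add: flip_bit_flip_bit)
      ultimately show ?thesis
        by blast
    qed (use u in auto)
  qed
  moreover have "finite (?Z \<union> flip_bit j ` ?Z)"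
    by simp
  ultimately have "card {..<(2::nat) ^ m} \<le> card (?Z \<union> flip_bit j ` ?Z)"
    by (intro card_mono)
  then have "2 ^ m \<le> card (?Z \<union> flip_bit j ` ?Z)"
    by simp
  also have "\<dots> \<le> card ?Z + card (flip_bit j ` ?Z)"
    by (rule card_Un_le)
  also have "\<dots> \<le> 2 * card ?Z"
    using card_image_le[of ?Z "flip_bit j"] by simp
  finally show ?thesis .
qed

lemma hadamard_add: "hadamard m (\<lambda>j. y j + z j) u = hadamard m y u + hadamard m z u"
  unfolding hadamard_def sum.distrib[symmetric] by (rule sum.cong) auto

lemma hadamard_scale: "hadamard m (\<lambda>j. c * y j) u = c * hadamard m y u"
  unfolding hadamard_def sum_distrib_left by (rule sum.cong) auto

lemma mult_add_less_mult:
  fixes r u v c :: nat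
  assumes "c < r" "u < v"
  shows "r * u + c < r * v"
proof -
  have "r * u + c < r * Suc u"
    using assms(1) by simp
  also have "\<dots> \<le> r * v"
    using assms(2) by (intro mult_le_mono2) simp
  finally show ?thesis .
qed

text \<open>Message coordinate \<open>j * r + c\<close> is coordinate \<open>j\<close> of the \<open>c\<close>-th of \<open>r\<close> messages, and
  position \<open>r * u + c\<close> carries symbol \<open>u\<close> of the \<open>c\<close>-th Hadamard codeword.\<close>

definition interleaved_hadamard :: "nat \<Rightarrow> nat \<Rightarrow> (nat \<Rightarrow> 'a::comm_ring_1) \<Rightarrow> nat \<Rightarrow> 'a" where
  "interleaved_hadamard r m x p =
     (if p < r * 2 ^ m then hadamard m (\<lambda>j. x (j * r + p mod r)) (p div r) else 0)"

lemma interleaved_hadamard_at: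
  assumes "c < r" "u < 2 ^ m"
  shows "interleaved_hadamard r m x (r * u + c) = hadamard m (\<lambda>j. x (j * r + c)) u"
  using assms mult_add_less_mult[OF assms] by (simp add: interleaved_hadamard_def)

lemma interleaved_hadamard_in_Fn: "interleaved_hadamard r m x \<in> Fn (r * 2 ^ m)"
  by (simp add: Fn_def interleaved_hadamard_def)

lemma linear_interleaved_hadamard:
  "Vector_Spaces.linear vscale vscale (interleaved_hadamard r m :: (nat \<Rightarrow> 'a::field) \<Rightarrow> _)"
  unfolding Vector_Spaces.linear_iff
  by (simp add: V.vector_space_axioms fun_eq_iff plus_fun_def vscale_def
      interleaved_hadamard_def hadamard_add hadamard_scale)

lemma interleaved_hadamard_zero: "interleaved_hadamard r m (\<lambda>i. 0) = (\<lambda>p. 0)"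
  by (simp add: fun_eq_iff interleaved_hadamard_def hadamard_zero)

lemma interleaved_hadamard_at_exp:
  assumes r: "0 < r" and q: "q < m * r"
  shows "interleaved_hadamard r m x (r * 2 ^ (q div r) + q mod r) = x q"
proof -
  have j: "q div r < m"
    using q r by (simp add: less_mult_imp_div_less)
  then have "(2::nat) ^ (q div r) < 2 ^ m"
    by simp
  then have "interleaved_hadamard r m x (r * 2 ^ (q div r) + q mod r)
      = hadamard m (\<lambda>j. x (j * r + q mod r)) (2 ^ (q div r))"
    using r by (intro interleaved_hadamard_at) simp_all
  also have "\<dots> = x q"
    using j by (simp add: hadamard_exp)
  finally show ?thesis .
qed

lemma inj_on_interleaved_hadamard:
  assumes "0 < r"
  shows "inj_on (interleaved_hadamard r m) (Fn (m * r))"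
proof (rule inj_onI)
  fix x y assume x: "x \<in> Fn (m * r)" and y: "y \<in> Fn (m * r)"
    and eq: "interleaved_hadamard r m x = interleaved_hadamard r m y"
  show "x = y"
  proof
    fix q show "x q = y q"
    proof (cases "q < m * r")
      case True
      then show ?thesis
        using eq interleaved_hadamard_at_exp[OF assms True] by metis
    qed (use x y in \<open>simp add: Fn_def\<close>)
  qed
qed

lemma wt_interleaved_hadamard_lower:
  assumes r: "0 < r" and q: "q < m * r" "x q \<noteq> 0"
  shows "2 ^ m \<le> 2 * wt (r * 2 ^ m) (interleaved_hadamard r m x)"
proof -
  define c where "c = q mod r"
  let ?y = "\<lambda>j. x (j * r + c)"
  let ?Z = "{u. u < 2 ^ m \<and> hadamard m ?y u \<noteq> 0}"
  have c: "c < r"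
    using r by (simp add: c_def)
  have "q div r < m"
    using q r by (simp add: less_mult_imp_div_less)
  moreover have "?y (q div r) \<noteq> 0"
    using q(2) by (simp add: c_def)
  ultimately have "2 ^ m \<le> 2 * card ?Z"
    by (rule hadamard_weight_lower)
  also have "card ?Z \<le> wt (r * 2 ^ m) (interleaved_hadamard r m x)"
    unfolding wt_def
  proof (rule card_inj_on_le)
    show "inj_on (\<lambda>u. r * u + c) ?Z"
      using r by (simp add: inj_on_def)
    show "(\<lambda>u. r * u + c) ` ?Z \<subseteq> {p. p < r * 2 ^ m \<and> interleaved_hadamard r m x p \<noteq> 0}"
      using c by (auto simp: interleaved_hadamard_at mult_add_less_mult)
  qed simp
  finally show ?thesis
    by simp
qed

lemma wt_interleaved_hadamard_unit_vec_0:
  assumes r: "0 < r" and m: "0 < m"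
  shows "wt (r * 2 ^ m) (interleaved_hadamard r m (unit_vec 0) :: nat \<Rightarrow> 'a::field) \<le> 2 ^ (m - 1)"
proof -
  let ?e = "interleaved_hadamard r m (unit_vec 0) :: nat \<Rightarrow> 'a"
  have "{p. p < r * 2 ^ m \<and> ?e p \<noteq> 0} \<subseteq> (\<lambda>a. r * (2 * a + 1)) ` {..<2 ^ (m - 1)}"
  proof
    fix p assume "p \<in> {p. p < r * 2 ^ m \<and> ?e p \<noteq> 0}"
    then have p: "p < r * 2 ^ m"
      and nz: "hadamard m (\<lambda>j. unit_vec 0 (j * r + p mod r) :: 'a) (p div r) \<noteq> 0"
      by (auto simp: interleaved_hadamard_def)
    have c: "p mod r = 0"
    proof (rule ccontr)
      assume "p mod r \<noteq> 0"
      then have "(\<lambda>j. unit_vec 0 (j * r + p mod r) :: 'a) = (\<lambda>j. 0)"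
        by (simp add: fun_eq_iff unit_vec_def)
      then show False
        using nz by (simp add: hadamard_zero)
    qed
    then have "(\<lambda>j. unit_vec 0 (j * r + p mod r) :: 'a) = unit_vec 0"
      using r by (simp add: fun_eq_iff unit_vec_def)
    then have odd: "odd (p div r)"
      using nz m by (simp add: hadamard_unit_vec_0 split: if_split_asm)
    have "p div r < 2 * 2 ^ (m - 1)"
      using p m by (simp add: less_mult_imp_div_less mult.commute power_Suc[symmetric])
    then have "p div r div 2 < 2 ^ (m - 1)"
      by simp
    moreover have "p = r * (2 * (p div r div 2) + 1)"
      using odd c by (metis add.right_neutral div_mult_mod_eq mult.commute odd_two_times_div_two_succ)
    ultimately show "p \<in> (\<lambda>a. r * (2 * a + 1)) ` {..<2 ^ (m - 1)}"
      by blast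
  qed
  then have "wt (r * 2 ^ m) ?e \<le> card ((\<lambda>a. r * (2 * a + 1)) ` {..<2 ^ (m - 1)})"
    unfolding wt_def by (intro card_mono) simp_all
  also have "\<dots> \<le> 2 ^ (m - 1)"
    using card_image_le[of "{..<(2::nat) ^ (m - 1)}" "\<lambda>a. r * (2 * a + 1)"] by simp
  finally show ?thesis .
qed

lemma linear_code_interleaved_hadamard:
  "linear_code (r * 2 ^ m) (interleaved_hadamard r m ` Fn (m * r) :: (nat \<Rightarrow> 'a::field) set)"
  using interleaved_hadamard_in_Fn
  by (intro linear_code_linear_image linear_interleaved_hadamard) blast

lemma code_dim_interleaved_hadamard:
  "0 < r \<Longrightarrow> code_dim (interleaved_hadamard r m ` Fn (m * r) :: (nat \<Rightarrow> 'a::field) set) = m * r"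
  by (intro code_dim_linear_image linear_interleaved_hadamard inj_on_interleaved_hadamard)

lemma min_dist_interleaved_hadamard:
  assumes r: "0 < r" and m: "0 < m"
  shows "min_dist (r * 2 ^ m) (interleaved_hadamard r m ` Fn (m * r) :: (nat \<Rightarrow> 'a::field) set)
    = 2 ^ (m - 1)"
proof (rule min_dist_eqI)
  have pow: "(2::nat) ^ m = 2 * 2 ^ (m - 1)"
    using m by (simp add: power_eq_if)
  fix y :: "nat \<Rightarrow> 'a"
  assume "y \<in> interleaved_hadamard r m ` Fn (m * r)" and nz: "\<exists>i<r * 2 ^ m. y i \<noteq> 0"
  then obtain x where x: "x \<in> Fn (m * r)" and y: "y = interleaved_hadamard r m x"
    by blast
  have "\<exists>q<m * r. x q \<noteq> 0"
  proof (rule ccontr)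
    assume "\<not> (\<exists>q<m * r. x q \<noteq> 0)"
    with x have "x = (\<lambda>i. 0)"
      by (auto simp: Fn_def fun_eq_iff not_less)
    with nz y show False
      by (simp add: interleaved_hadamard_zero)
  qed
  then obtain q where "q < m * r" "x q \<noteq> 0"
    by blast
  then have "2 ^ m \<le> 2 * wt (r * 2 ^ m) y"
    unfolding y using r by (intro wt_interleaved_hadamard_lower)
  then show "2 ^ (m - 1) \<le> wt (r * 2 ^ m) y"
    unfolding pow by simp
next
  have "0 < m * r"
    using r m by simp
  then show "interleaved_hadamard r m (unit_vec 0) \<in> interleaved_hadamard r m ` Fn (m * r)"
    by (intro imageI) (simp add: Fn_def unit_vec_def)
  have "(1::nat) < 2 ^ m"
    using m by (intro one_less_power) simp_all
  then have "r < r * 2 ^ m"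
    using r by simp
  moreover have "interleaved_hadamard r m (unit_vec 0) r = (1 :: 'a)"
    using interleaved_hadamard_at_exp[OF r \<open>0 < m * r\<close>, of "unit_vec 0"]
    by (simp add: unit_vec_def)
  ultimately show "\<exists>i<r * 2 ^ m. (interleaved_hadamard r m (unit_vec 0) :: nat \<Rightarrow> 'a) i \<noteq> 0"
    by (intro exI[of _ r]) simp
  show "wt (r * 2 ^ m) (interleaved_hadamard r m (unit_vec 0) :: nat \<Rightarrow> 'a) \<le> 2 ^ (m - 1)"
    using r m by (rule wt_interleaved_hadamard_unit_vec_0)
qed

lemma interleaved_hadamard_rate_times_distance:
  assumes "0 < r" "0 < m"
  shows "real (m * r) * real (2 ^ (m - 1) :: nat) / real (r * 2 ^ m) = real m / 2"
proof -
  have "(2::real) ^ m = 2 * 2 ^ (m - 1)"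
    using assms(2) by (simp add: power_eq_if)
  then show ?thesis
    using assms(1) by (simp add: field_simps)
qed

lemma sqrt_four_pronic_bounds:
  fixes x :: real
  assumes "0 < x"
  shows "2 * x < sqrt (4 * x * (x + 1))" and "sqrt (4 * x * (x + 1)) < 2 * x + 1"
proof -
  show "2 * x < sqrt (4 * x * (x + 1))"
    using assms by (intro real_less_rsqrt) (simp add: power2_eq_square algebra_simps)
  have "sqrt (4 * x * (x + 1)) < sqrt ((2 * x + 1) ^ 2)"
    by (intro real_sqrt_less_mono) (simp add: power2_eq_square algebra_simps)
  then show "sqrt (4 * x * (x + 1)) < 2 * x + 1"
    using assms by simp
qed

theorem theorem1p1:
  shows "\<exists>(n :: nat \<Rightarrow> nat) (C :: nat \<Rightarrow> (nat \<Rightarrow> 'a::field) set).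
    \<forall>i\<ge>1. linear_code (n i) (C i) \<and>
      real (code_dim (C i)) * real (min_dist (n i) (C i)) / real (n i) = 2 * real i \<and>
      2 * real i > sqrt (real (code_dim (C i))) - 1 \<and>
      sqrt (real (code_dim (C i))) - 1 > 2 * real i - 1"
proof (intro exI allI impI)
  fix i :: nat
  assume "1 \<le> i"
  then have r: "0 < i + 1" and m: "0 < 4 * i"
    by simp_all
  let ?C = "interleaved_hadamard (i + 1) (4 * i) ` Fn (4 * i * (i + 1)) :: (nat \<Rightarrow> 'a) set"
  have dim: "code_dim ?C = 4 * i * (i + 1)"
    by (rule code_dim_interleaved_hadamard[OF r])
  then have k: "real (code_dim ?C) = 4 * real i * (real i + 1)"
    by (simp add: algebra_simps)
  have rate: "real (code_dim ?C) * real (min_dist ((i + 1) * 2 ^ (4 * i)) ?C)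
      / real ((i + 1) * 2 ^ (4 * i)) = 2 * real i"
    unfolding dim min_dist_interleaved_hadamard[OF r m]
      interleaved_hadamard_rate_times_distance[OF r m] by simp
  have "0 < real i"
    using m by simp
  from sqrt_four_pronic_bounds[OF this, folded k]
  show "linear_code ((i + 1) * 2 ^ (4 * i)) ?C \<and>
      real (code_dim ?C) * real (min_dist ((i + 1) * 2 ^ (4 * i)) ?C) / real ((i + 1) * 2 ^ (4 * i))
        = 2 * real i \<and>
      2 * real i > sqrt (real (code_dim ?C)) - 1 \<and>
      sqrt (real (code_dim ?C)) - 1 > 2 * real i - 1"
    by (intro conjI linear_code_interleaved_hadamard rate) linarith+
qed

end
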